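(* Let $n\ge4$. The fan $F_{2,n}$ in $\mathbb R^{n-3}$ is equal to the Stanley–Pitman fan $F_{n-3}$ in $\mathbb R^{n-3}$ (they have the same cones).
   Context: $\mathrm{Web}_{k,n}$: grid vertices $v_{a,c}$, $a\in[k]$ (rows top to bottom), $c\in[n-k]$ (columns right to left); sources $s_a$ right of row $a$ labelled $a$; sinks $t_c$ below column $c$ labelled $k+c$; edges $s_a\to v_{a,1}$, $v_{a,c}\to v_{a,c+1}$, $v_{a,c}\to v_{a+1,c}$, $v_{k,c}\to t_c$. Regions $r_{a,c}$ ($a\in[k]$, $c\in[n-k]$): the face just below row $a$ (below row $k$ if $a=k$) and just right of column $c$ (between column 1 and the right boundary if $c=1$); inner regions are those with $a<k$ and $c\ge2$, the others are outer. A path $p$ from $s_i$ moves left along row $i$ to column $c_i$, down, left to $c_{i+1}$, \dots, down from $v_{k,c_k}$ to $t_{c_k}$ ($c_i\le\dots\le c_k$). Given real values $x_r$ on the inner regions (outer regions assigned the value $0$), $\mathrm{Sum}_p(x)=\sum_{a=i}^k\sum_{c=1}^{c_a}x_{r_{a,c}}$. For $K\in\binom{[n]}{k}$, $\mathrm{Path}(K)$ is the set of families of pairwise vertex-disjoint paths from the sources labelled by $[k]\setminus K$ to the sinks labelled by $K\setminus[k]$, and $\operatorname{Trop}P_K(x)=\min_{S\in\mathrm{Path}(K)}\sum_{p\in S}\mathrm{Sum}_p(x)$ (values assigned to outer regions would only add a constant to each $\operatorname{Trop}P_K$). $F_{k,n}$ is the complete fan in $\mathbb R^{(k-1)(n-k-1)}$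 whose maximal cones are the domains of linearity of the piecewise linear map $x\mapsto(\operatorname{Trop}P_K(x))_{K}$, i.e. the common refinement of the fans of domains of linearity of the functions $\operatorname{Trop}P_K$. For $k=2$ the inner regions are $r_{1,c}$, $c=2,\dots,n-2$, and we use coordinates $x_m=x_{r_{1,m+1}}$, $m=1,\dots,n-3$ (inner regions labelled right to left). Stanley–Pitman fan $F_{n-3}$: a plane binary tree is a rooted tree in which every vertex has either no children or exactly two, designated left and right; internal vertices are non-leaves. For a plane binary tree $T$ with $n-1$ leaves, label its $n-2$ internal vertices $1,\dots,n-2$ in in-order (symmetric order: left subtree, then the vertex, then right subtree). For each pair of internal vertices with $i$ the parent of $j$, impose $x_i+\dots+x_{j-1}\ge0$ if $i<j$, and $x_j+\dots+x_{i-1}\le0$ if $i>j$. These $n-3$ inequalities define a cone $C_T\subset\mathbb R^{n-3}$, and $F_{n-3}$ is the fan whose maximal cones are the $C_T$ over all such trees $T$. *)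

theory Defs
  imports Complex_Main
begin

text \<open>A point of R^R (R a finite coordinate set) is a function that vanishes outside R.
  The topology is the Euclidean one, described via the sup-norm over the coordinates R.\<close>

definition Vsp :: "'r set \<Rightarrow> ('r \<Rightarrow> real) set" where
  "Vsp R = {x. \<forall>r. r \<notin> R \<longrightarrow> x r = 0}"

definition has_nonempty_interior :: "'r set \<Rightarrow> ('r \<Rightarrow> real) set \<Rightarrow> bool" where
  "has_nonempty_interior R D \<longleftrightarrow>
     (\<exists>x\<in>Vsp R. \<exists>e>0. \<forall>y\<in>Vsp R. (\<forall>r\<in>R. \<bar>y r - x r\<bar> < e) \<longrightarrow> y \<in> D)"

text \<open>Domains of linearity (maximal cones) of a piecewise linear map
  x \<mapsto> (F K x)_{K \<in> I}: the full-dimensional maximal sets on which the map agrees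
  with one linear map (a K r) (a linear map is determined by its values on a set with
  nonempty interior, so the maximal such set is the one below).\<close>

definition linearity_domains ::
  "'r set \<Rightarrow> 'k set \<Rightarrow> ('k \<Rightarrow> ('r \<Rightarrow> real) \<Rightarrow> real) \<Rightarrow> ('r \<Rightarrow> real) set set" where
  "linearity_domains R I F =
     {D. (\<exists>a :: 'k \<Rightarrow> 'r \<Rightarrow> real.
            D = {x \<in> Vsp R. \<forall>K\<in>I. F K x = (\<Sum>r\<in>R. a K r * x r)})
         \<and> has_nonempty_interior R D}"

text \<open>Vertex v_{a,c} is the pair (a,c); region r_{a,c} is the pair (a,c).\<close>

definition inner_regions :: "nat \<Rightarrow> nat \<Rightarrow> (nat \<times> nat) set" where
  "inner_regions k n = {(a, c). 1 \<le> a \<and> a < k \<and> 2 \<le> c \<and> c \<le> n - k}"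

text \<open>A path from source s_i is encoded by its column sequence p i \<le> p (i+1) \<le> ... \<le> p k
  (p a = c_a); it ends at sink t_{p k}, labelled k + p k.\<close>

definition is_web_path :: "nat \<Rightarrow> nat \<Rightarrow> nat \<Rightarrow> (nat \<Rightarrow> nat) \<Rightarrow> bool" where
  "is_web_path k n i p \<longleftrightarrow> 1 \<le> i \<and> i \<le> k \<and> 1 \<le> p i \<and>
     (\<forall>a\<in>{i..<k}. p a \<le> p (Suc a)) \<and> p k \<le> n - k"

text \<open>Internal vertices visited by the path (source and sink vertices are distinct
  for distinct labels, and the sink t_c is determined by v_{k,c}).\<close>

definition path_vertices :: "nat \<Rightarrow> nat \<Rightarrow> (nat \<Rightarrow> nat) \<Rightarrow> (nat \<times> nat) set" where
  "path_vertices k i p =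
     {(i, c) | c. 1 \<le> c \<and> c \<le> p i} \<union>
     {(a, c) | a c. i < a \<and> a \<le> k \<and> p (a - 1) \<le> c \<and> c \<le> p a}"

definition path_sum :: "nat \<Rightarrow> nat \<Rightarrow> (nat \<Rightarrow> nat) \<Rightarrow> (nat \<times> nat \<Rightarrow> real) \<Rightarrow> real" where
  "path_sum k i p x = (\<Sum>a\<in>{i..k}. \<Sum>c\<in>{1..p a}. x (a, c))"

text \<open>Path(K): families of pairwise vertex-disjoint paths from the sources labelled
  [k] - K to the sinks labelled K - [k] (the family S assigns to each such source i its
  path S i).\<close>

definition path_families :: "nat \<Rightarrow> nat \<Rightarrow> nat set \<Rightarrow> (nat \<Rightarrow> nat \<Rightarrow> nat) set" where
  "path_families k n K =
     {S. (\<forall>i\<in>{1..k} - K. is_web_path k n i (S i) \<and> k + S i k \<in> K - {1..k})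
       \<and> (\<forall>i\<in>{1..k} - K. \<forall>j\<in>{1..k} - K. i \<noteq> j \<longrightarrow>
              path_vertices k i (S i) \<inter> path_vertices k j (S j) = {})}"

text \<open>x is a point of R^{inner regions}, i.e. it vanishes on the outer regions.\<close>

definition TropP :: "nat \<Rightarrow> nat \<Rightarrow> nat set \<Rightarrow> (nat \<times> nat \<Rightarrow> real) \<Rightarrow> real" where
  "TropP k n K x =
     Min ((\<lambda>S. \<Sum>i\<in>{1..k} - K. path_sum k i (S i) x) ` path_families k n K)"

definition k_subsets :: "nat \<Rightarrow> nat \<Rightarrow> nat set set" where
  "k_subsets k n = {K. K \<subseteq> {1..n} \<and> card K = k}"

definition web_fan :: "nat \<Rightarrow> nat \<Rightarrow> (nat \<times> nat \<Rightarrow> real) set set" where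
  "web_fan k n = linearity_domains (inner_regions k n) (k_subsets k n) (\<lambda>K x. TropP k n K x)"

definition coords2 :: "nat \<Rightarrow> (nat \<times> nat \<Rightarrow> real) \<Rightarrow> (nat \<Rightarrow> real)" where
  "coords2 n y = (\<lambda>m. if 1 \<le> m \<and> m \<le> n - 3 then y (1, Suc m) else 0)"

datatype ptree = Leaf | Node ptree ptree

fun leaves :: "ptree \<Rightarrow> nat" where
  "leaves Leaf = 1"
| "leaves (Node l r) = leaves l + leaves r"

fun internals :: "ptree \<Rightarrow> nat" where
  "internals Leaf = 0"
| "internals (Node l r) = internals l + 1 + internals r"

text \<open>In-order label of the root of a subtree whose internal vertices get labels off+1, off+2, ...\<close>

fun root_label :: "nat \<Rightarrow> ptree \<Rightarrow> nat" where
  "root_label off Leaf = 0"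
| "root_label off (Node l r) = off + internals l + 1"

text \<open>Pairs (i, j) of in-order labels with internal vertex i the parent of internal vertex j.\<close>

fun parent_child :: "nat \<Rightarrow> ptree \<Rightarrow> (nat \<times> nat) set" where
  "parent_child off Leaf = {}"
| "parent_child off (Node l r) =
     (let me = off + internals l + 1 in
       (if l = Leaf then {} else {(me, root_label off l)})
     \<union> (if r = Leaf then {} else {(me, root_label me r)})
     \<union> parent_child off l \<union> parent_child me r)"

definition SP_cone :: "nat \<Rightarrow> ptree \<Rightarrow> (nat \<Rightarrow> real) set" where
  "SP_cone d T = {x \<in> Vsp {1..d}. \<forall>(i, j) \<in> parent_child 0 T.
      (i < j \<longrightarrow> (\<Sum>m\<in>{i..<j}. x m) \<ge> 0) \<and> (j < i \<longrightarrow> (\<Sum>m\<in>{j..<i}. x m) \<le> 0)}"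

definition stanley_pitman_fan :: "nat \<Rightarrow> (nat \<Rightarrow> real) set set" where
  "stanley_pitman_fan d = {SP_cone d T | T. leaves T = d + 2}"

end

theory Submission
  imports Defs "HOL-Library.Indicator_Function"
begin

text \<open>For k = 2 only the top row carries weights, so the weight of a path family for K is the
  prefix sum P(m) = x_1 + ... + x_m at the column m + 1 where the path from s_1 turns down, and
  the admissible turning columns form an interval [a, b] determined by K, with every interval in
  [0, n - 3] occurring. Hence Trop P_K = min of P over [a, b], a range-minimum query. All these
  minima are attained at prescribed points exactly when the Cartesian tree of P (the tree whose
  every vertex carries the minimum of P over its subtree) is a fixed tree T; the minimum over
  [a, b] is then P at the lowest common ancestor of a and b. So the domains of linearity are the
  cones on which P is heap-ordered along T, and heap order along parent-child edges is
  precisely the system of inequalities defining the Stanley--Pitman cone C_T.\<close>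

section \<open>Heap-ordered sequences on plane binary trees\<close>

text \<open>The internal vertices of a tree are addressed by 0-based in-order position: those of T
  occupy off ..< off + internals T, and the root of Node l r sits at off + internals l, one
  less than its label in parent_child. With margin \<delta> = 0, heap order means that T is a
  Cartesian tree of f.\<close>

fun heap_ordered :: "real \<Rightarrow> (nat \<Rightarrow> real) \<Rightarrow> nat \<Rightarrow> ptree \<Rightarrow> bool" where
  "heap_ordered \<delta> f off Leaf = True"
| "heap_ordered \<delta> f off (Node l r) =
     ((\<forall>q\<in>{off..<off + internals (Node l r)}. q \<noteq> off + internals l \<longrightarrow> f (off + internals l) + \<delta> \<le> f q)
      \<and> heap_ordered \<delta> f off l \<and> heap_ordered \<delta> f (Suc (off + internals l)) r)"

fun lca :: "nat \<Rightarrow> ptree \<Rightarrow> nat \<Rightarrow> nat \<Rightarrow> nat" where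
  "lca off Leaf a b = a"
| "lca off (Node l r) a b =
     (if b < off + internals l then lca off l a b
      else if off + internals l < a then lca (Suc (off + internals l)) r a b
      else off + internals l)"

fun vertex_depth :: "nat \<Rightarrow> ptree \<Rightarrow> nat \<Rightarrow> nat" where
  "vertex_depth off Leaf q = 0"
| "vertex_depth off (Node l r) q =
     (if q < off + internals l then Suc (vertex_depth off l q)
      else if off + internals l < q then Suc (vertex_depth (Suc (off + internals l)) r q)
      else 0)"

lemma leaves_eq_Suc_internals: "leaves T = Suc (internals T)"
  by (induction T) auto

lemma heap_ordered_cong:
  "(\<And>q. off \<le> q \<Longrightarrow> q < off + internals T \<Longrightarrow> f q = g q) \<Longrightarrow>
   heap_ordered \<delta> f off T = heap_ordered \<delta> g off T"
proof (induction T arbitrary: off)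
  case Leaf
  then show ?case by simp
next
  case (Node l r)
  have "heap_ordered \<delta> f off l = heap_ordered \<delta> g off l"
    by (rule Node.IH(1)) (use Node.prems in auto)
  moreover have "heap_ordered \<delta> f (Suc (off + internals l)) r = heap_ordered \<delta> g (Suc (off + internals l)) r"
    by (rule Node.IH(2)) (use Node.prems in auto)
  moreover have "f (off + internals l) = g (off + internals l)"
    using Node.prems by auto
  ultimately show ?case
    using Node.prems by auto
qed

lemma heap_ordered_add_const: "heap_ordered \<delta> (\<lambda>q. c + f q) off T = heap_ordered \<delta> f off T"
  by (induction T arbitrary: off) auto

lemma heap_ordered_root_le:
  assumes "heap_ordered 0 f off (Node l r)" "off \<le> q" "q < off + internals (Node l r)"
  shows "f (off + internals l) \<le> f q"
  using assms by (cases "q = off + internals l") auto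

lemma heap_ordered_vertex_depth: "heap_ordered 1 (\<lambda>q. real (vertex_depth off T q)) off T"
proof (induction T arbitrary: off)
  case Leaf
  then show ?case by simp
next
  case (Node l r)
  have "heap_ordered 1 (\<lambda>q. real (vertex_depth off (Node l r) q)) off l
        = heap_ordered 1 (\<lambda>q. 1 + real (vertex_depth off l q)) off l"
    by (rule heap_ordered_cong) auto
  moreover have "heap_ordered 1 (\<lambda>q. real (vertex_depth off (Node l r) q)) (Suc (off + internals l)) r
        = heap_ordered 1 (\<lambda>q. 1 + real (vertex_depth (Suc (off + internals l)) r q)) (Suc (off + internals l)) r"
    by (rule heap_ordered_cong) auto
  ultimately show ?case
    using Node.IH heap_ordered_add_const by auto
qed

lemma heap_ordered_add_scaled:
  assumes "heap_ordered d1 f off T" "heap_ordered d2 g off T" "c \<ge> 0"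
  shows "heap_ordered (d1 + c * d2) (\<lambda>q. f q + c * g q) off T"
  using assms
proof (induction T arbitrary: off)
  case Leaf
  then show ?case by simp
next
  case (Node l r)
  let ?m = "off + internals l"
  have "f ?m + c * g ?m + (d1 + c * d2) \<le> f q + c * g q"
    if q: "q \<in> {off..<off + internals (Node l r)}" "q \<noteq> ?m" for q
  proof -
    have "f ?m + d1 \<le> f q" "g ?m + d2 \<le> g q"
      using Node.prems q by auto
    then show ?thesis
      using mult_left_mono[of "g ?m + d2" "g q" c] Node.prems(3) by (simp add: algebra_simps)
  qed
  then show ?case
    using Node by auto
qed

lemma heap_ordered_perturb:
  assumes "heap_ordered \<delta> f off T" "\<And>q. off \<le> q \<Longrightarrow> q < off + internals T \<Longrightarrow> \<bar>g q - f q\<bar> < \<delta> / 2"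
  shows "heap_ordered 0 g off T"
  using assms
proof (induction T arbitrary: off)
  case Leaf
  then show ?case by simp
next
  case (Node l r)
  let ?m = "off + internals l"
  have "g ?m \<le> g q" if q: "q \<in> {off..<off + internals (Node l r)}" "q \<noteq> ?m" for q
  proof -
    have "f ?m + \<delta> \<le> f q" "\<bar>g q - f q\<bar> < \<delta> / 2" "\<bar>g ?m - f ?m\<bar> < \<delta> / 2"
      using Node.prems q by auto
    then show ?thesis by linarith
  qed
  moreover have "heap_ordered 0 g off l" "heap_ordered 0 g (Suc ?m) r"
    by (rule Node.IH; use Node.prems in auto)+
  ultimately show ?case by simp
qed

lemma cartesian_tree_exists: "\<exists>T. internals T = len \<and> heap_ordered 0 f off T"
proof (induction len arbitrary: off rule: less_induct)
  case (less len)
  show ?case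
  proof (cases len)
    case 0
    then show ?thesis by (intro exI[of _ Leaf]) auto
  next
    case (Suc k)
    obtain \<rho> where \<rho>: "\<rho> \<in> {off..off + k}" "\<forall>q\<in>{off..off + k}. f \<rho> \<le> f q"
      using arg_min_if_finite[of "{off..off + k}" f] by (intro that) (auto simp: not_less)
    have "\<rho> - off < len" "off + k - \<rho> < len"
      using \<rho>(1) Suc by auto
    then obtain Tl Tr where Tl: "internals Tl = \<rho> - off" "heap_ordered 0 f off Tl"
      and Tr: "internals Tr = off + k - \<rho>" "heap_ordered 0 f (Suc \<rho>) Tr"
      using less.IH by meson
    have "off + internals Tl = \<rho>"
      using Tl \<rho>(1) by auto
    then show ?thesis
      using Tl Tr \<rho> Suc by (intro exI[of _ "Node Tl Tr"]) auto
  qed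
qed

lemma lca_between:
  "off \<le> a \<Longrightarrow> a \<le> b \<Longrightarrow> b < off + internals T \<Longrightarrow> a \<le> lca off T a b \<and> lca off T a b \<le> b"
  by (induction T arbitrary: off) auto

lemma heap_ordered_0_iff_lca_le:
  "heap_ordered 0 f off T \<longleftrightarrow>
     (\<forall>a b q. off \<le> a \<longrightarrow> a \<le> q \<longrightarrow> q \<le> b \<longrightarrow> b < off + internals T \<longrightarrow> f (lca off T a b) \<le> f q)"
proof (induction T arbitrary: off)
  case Leaf
  then show ?case by simp
next
  case (Node l r)
  let ?m = "off + internals l"
  show ?case
  proof
    assume H: "heap_ordered 0 f off (Node l r)"
    have "f (lca off (Node l r) a b) \<le> f q"
      if "off \<le> a" "a \<le> q" "q \<le> b" "b < off + internals (Node l r)" for a b q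
      using H Node.IH(1)[of off] Node.IH(2)[of "Suc ?m"] heap_ordered_root_le[OF H, of q] that
      by auto
    then show "\<forall>a b q. off \<le> a \<longrightarrow> a \<le> q \<longrightarrow> q \<le> b \<longrightarrow> b < off + internals (Node l r) \<longrightarrow>
        f (lca off (Node l r) a b) \<le> f q" by blast
  next
    assume H: "\<forall>a b q. off \<le> a \<longrightarrow> a \<le> q \<longrightarrow> q \<le> b \<longrightarrow> b < off + internals (Node l r) \<longrightarrow>
        f (lca off (Node l r) a b) \<le> f q"
    have "heap_ordered 0 f off l"
      unfolding Node.IH(1)
    proof (intro allI impI)
      fix a b q assume "off \<le> a" "a \<le> q" "q \<le> b" "b < off + internals l"
      then show "f (lca off l a b) \<le> f q" using H[rule_format, of a q b] by auto
    qed
    moreover have "heap_ordered 0 f (Suc ?m) r"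
      unfolding Node.IH(2)
    proof (intro allI impI)
      fix a b q assume "Suc ?m \<le> a" "a \<le> q" "q \<le> b" "b < Suc ?m + internals r"
      then show "f (lca (Suc ?m) r a b) \<le> f q" using H[rule_format, of a q b] by auto
    qed
    moreover have "f ?m \<le> f q" if "q \<in> {off..<off + internals (Node l r)}" for q
      using H[rule_format, of off q "?m + internals r"] that by auto
    ultimately show "heap_ordered 0 f off (Node l r)" by simp
  qed
qed

lemma parent_child_bounds:
  "(i, j) \<in> parent_child off T \<Longrightarrow>
   off < i \<and> i \<le> off + internals T \<and> off < j \<and> j \<le> off + internals T \<and> i \<noteq> j"
proof (induction T arbitrary: off)
  case Leaf
  then show ?case by simp
next
  case (Node l r)
  let ?me = "off + internals l + 1"
  have "l \<noteq> Leaf \<Longrightarrow> off < root_label off l \<and> root_label off l < ?me"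
    "r \<noteq> Leaf \<Longrightarrow> ?me < root_label ?me r \<and> root_label ?me r \<le> ?me + internals r"
    by (cases l; simp) (cases r; simp)
  then show ?case
    using Node.prems Node.IH(1)[of off] Node.IH(2)[of ?me]
    by (auto simp: Let_def split: if_splits)
qed

lemma heap_ordered_0_Node_iff:
  "heap_ordered 0 f off (Node l r) \<longleftrightarrow>
     heap_ordered 0 f off l \<and> heap_ordered 0 f (Suc (off + internals l)) r \<and>
     (l \<noteq> Leaf \<longrightarrow> f (off + internals l) \<le> f (root_label off l - 1)) \<and>
     (r \<noteq> Leaf \<longrightarrow> f (off + internals l) \<le> f (root_label (Suc (off + internals l)) r - 1))"
  (is "?heap \<longleftrightarrow> ?hl \<and> ?hr \<and> ?el \<and> ?er")
proof
  assume H: ?heap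
  have ?el
    using heap_ordered_root_le[OF H, of "root_label off l - 1"] by (cases l) auto
  moreover have ?er
    using heap_ordered_root_le[OF H, of "root_label (Suc (off + internals l)) r - 1"] by (cases r) auto
  ultimately show "?hl \<and> ?hr \<and> ?el \<and> ?er"
    using H by simp
next
  assume H: "?hl \<and> ?hr \<and> ?el \<and> ?er"
  let ?m = "off + internals l"
  have "f ?m \<le> f q" if q: "q \<in> {off..<off + internals (Node l r)}" "q \<noteq> ?m" for q
  proof (cases "q < ?m")
    case True
    then obtain l1 r1 where l: "l = Node l1 r1"
      using q by (cases l) auto
    then show ?thesis
      using H heap_ordered_root_le[of f off l1 r1 q] q True by fastforce
  next
    case False
    then obtain l1 r1 where r: "r = Node l1 r1"
      using q by (cases r) auto
    then show ?thesis
      using H heap_ordered_root_le[of f "Suc ?m" l1 r1 q] q False by fastforce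
  qed
  then show ?heap
    using H by simp
qed

lemma parent_child_le_iff_heap_ordered:
  "(\<forall>(i, j)\<in>parent_child off T. f (i - 1) \<le> f (j - 1)) \<longleftrightarrow> heap_ordered 0 f off T"
proof (induction T arbitrary: off)
  case Leaf
  then show ?case by simp
next
  case (Node l r)
  let ?m = "off + internals l"
  have "(\<forall>(i, j)\<in>parent_child off (Node l r). f (i - 1) \<le> f (j - 1)) \<longleftrightarrow>
      (\<forall>(i, j)\<in>parent_child off l. f (i - 1) \<le> f (j - 1)) \<and>
      (\<forall>(i, j)\<in>parent_child (Suc ?m) r. f (i - 1) \<le> f (j - 1)) \<and>
      (l \<noteq> Leaf \<longrightarrow> f ?m \<le> f (root_label off l - 1)) \<and>
      (r \<noteq> Leaf \<longrightarrow> f ?m \<le> f (root_label (Suc ?m) r - 1))"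
    by (auto simp: Let_def)
  then show ?case
    unfolding heap_ordered_0_Node_iff Node.IH .
qed

section \<open>The Stanley--Pitman cones\<close>

definition prefix_sum :: "(nat \<Rightarrow> real) \<Rightarrow> nat \<Rightarrow> real" where
  "prefix_sum x m = (\<Sum>l\<in>{1..m}. x l)"

lemma sum_atLeastLessThan_eq_prefix_sum_diff:
  assumes "1 \<le> i" "i \<le> j"
  shows "(\<Sum>m\<in>{i..<j}. x m) = prefix_sum x (j - 1) - prefix_sum x (i - 1)"
proof -
  have "{1..j - 1} = {1..<j}" "{1..i - 1} = {1..<i}"
    using assms by auto
  moreover have "sum x {1..<j} = sum x {1..<i} + sum x {i..<j}"
    using assms by (simp add: sum.atLeastLessThan_concat)
  ultimately show ?thesis
    unfolding prefix_sum_def by simp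
qed

lemma SP_cone_eq_heap_ordered: "SP_cone d T = {x \<in> Vsp {1..d}. heap_ordered 0 (prefix_sum x) 0 T}"
proof -
  have "((i < j \<longrightarrow> (\<Sum>m\<in>{i..<j}. x m) \<ge> 0) \<and> (j < i \<longrightarrow> (\<Sum>m\<in>{j..<i}. x m) \<le> 0))
       \<longleftrightarrow> prefix_sum x (i - 1) \<le> prefix_sum x (j - 1)" if "(i, j) \<in> parent_child 0 T" for i j x
    using parent_child_bounds[OF that] sum_atLeastLessThan_eq_prefix_sum_diff[of i j x]
      sum_atLeastLessThan_eq_prefix_sum_diff[of j i x]
    by (cases "i < j") auto
  then show ?thesis
    unfolding SP_cone_def parent_child_le_iff_heap_ordered[symmetric] by fast
qed

section \<open>Path families in Web_{2,n}\<close>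

text \<open>The weight of the path from s_1 that turns down at column m + 1; the second row and
  r_{1,1} are outer regions.\<close>

definition top_path_weight :: "(nat \<times> nat \<Rightarrow> real) \<Rightarrow> nat \<Rightarrow> real" where
  "top_path_weight y m = (\<Sum>c\<in>{2..Suc m}. y (1, c))"

text \<open>For K = {i, j} with i < j and 1 \<notin> K, the path from s_1 ends at sink j, i.e. in column
  j - 2, and, if i \<noteq> 2, must turn down left of column i - 2, where the path from s_2 ends.\<close>

definition first_turn :: "nat set \<Rightarrow> nat" where
  "first_turn K = (if 1 \<in> K then 0 else Min K - 2)"

definition last_turn :: "nat set \<Rightarrow> nat" where
  "last_turn K = (if 1 \<in> K then 0 else Max K - 3)"

definition family_weights :: "nat \<Rightarrow> nat set \<Rightarrow> (nat \<times> nat \<Rightarrow> real) \<Rightarrow> real set" where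
  "family_weights n K y = (\<lambda>S. \<Sum>i\<in>{1..2} - K. path_sum 2 i (S i) y) ` path_families 2 n K"

lemma top_path_weight_0 [simp]: "top_path_weight y 0 = 0"
  by (simp add: top_path_weight_def)

lemma inner_regions_2: "inner_regions 2 n = Pair 1 ` {2..n - 2}"
  unfolding inner_regions_def by auto

lemma Vsp_inner_regions_2_outer:
  "y \<in> Vsp (inner_regions 2 n) \<Longrightarrow> y (2, c) = 0 \<and> y (1, 1) = 0"
  unfolding Vsp_def inner_regions_def by auto

lemma path_sum_2_2: "y \<in> Vsp (inner_regions 2 n) \<Longrightarrow> path_sum 2 2 p y = 0"
  unfolding path_sum_def using Vsp_inner_regions_2_outer[of y n] by simp

lemma path_sum_2_1:
  assumes "y \<in> Vsp (inner_regions 2 n)" "1 \<le> p 1"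
  shows "path_sum 2 1 p y = top_path_weight y (p 1 - 1)"
proof -
  have "{1..2::nat} = {1, 2}" "{1..p 1} = insert 1 {2..Suc (p 1 - 1)}"
    using assms(2) by auto
  then show ?thesis
    using Vsp_inner_regions_2_outer[OF assms(1)] unfolding path_sum_def top_path_weight_def by simp
qed

lemma is_web_path_2_1: "is_web_path 2 n 1 p \<longleftrightarrow> 1 \<le> p 1 \<and> p 1 \<le> p 2 \<and> p 2 \<le> n - 2"
proof -
  have "{1..<2::nat} = {1}" by auto
  then show ?thesis
    unfolding is_web_path_def by (auto simp: numeral_2_eq_2)
qed

lemma is_web_path_2_2: "is_web_path 2 n 2 p \<longleftrightarrow> 1 \<le> p 2 \<and> p 2 \<le> n - 2"
  unfolding is_web_path_def by auto

lemma path_vertices_2_disjoint_iff: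
  assumes "1 \<le> p 1" "p 1 \<le> p 2"
  shows "path_vertices 2 1 p \<inter> path_vertices 2 2 q = {} \<longleftrightarrow> q 2 < p 1"
proof -
  have "path_vertices 2 1 p = {(1, c) | c. 1 \<le> c \<and> c \<le> p 1} \<union> {(2, c) | c. p 1 \<le> c \<and> c \<le> p 2}"
    unfolding path_vertices_def by (auto simp: numeral_2_eq_2 le_Suc_eq)
  moreover have "path_vertices 2 2 q = {(2, c) | c. 1 \<le> c \<and> c \<le> q 2}"
    unfolding path_vertices_def by auto
  ultimately show ?thesis
    using assms by auto
qed

lemma k_subsets_2_elim:
  assumes "K \<in> k_subsets 2 n"
  obtains i j where "K = {i, j}" "i < j" "1 \<le> i" "j \<le> n"
proof -
  obtain i j where ij: "K = {i, j}" "i \<noteq> j"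
    using assms unfolding k_subsets_def by (auto simp: card_2_iff)
  have "K \<subseteq> {1..n}"
    using assms unfolding k_subsets_def by auto
  then show ?thesis
    using that[of i j] that[of j i] ij by (cases "i < j") (auto simp: insert_commute)
qed

lemma family_weights_if_1_in:
  assumes "K \<in> k_subsets 2 n" "1 \<in> K" "y \<in> Vsp (inner_regions 2 n)"
  shows "family_weights n K y = {0}"
proof -
  obtain i j where ij: "K = {i, j}" "i < j" "1 \<le> i" "j \<le> n"
    using k_subsets_2_elim[OF assms(1)] .
  with assms(2) have j: "K = {1, j}" "1 < j" "j \<le> n"
    by auto
  show ?thesis
  proof (cases "j = 2")
    case True
    then have d: "{1..2} - K = {}"
      using j by auto
    have "(\<lambda>_ _. 0) \<in> path_families 2 n K"
      unfolding path_families_def d by simp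
    then show ?thesis
      unfolding family_weights_def d by auto
  next
    case False
    then have d: "{1..2} - K = {2}"
      using j by auto
    have "(\<lambda>_ _. j - 2) \<in> path_families 2 n K"
      unfolding path_families_def d using j False by (auto simp: is_web_path_2_2)
    then show ?thesis
      unfolding family_weights_def d using path_sum_2_2[OF assms(3)] by auto
  qed
qed

lemma family_weights_2_j:
  assumes "2 < j" "j \<le> n" "y \<in> Vsp (inner_regions 2 n)"
  shows "family_weights n {2, j} y = top_path_weight y ` {0..j - 3}"
proof -
  have d: "{1..2} - {2, j} = {1}" and d2: "{2, j} - {1..2} = {j}"
    using assms by auto
  have fam: "S \<in> path_families 2 n {2, j} \<longleftrightarrow> is_web_path 2 n 1 (S 1) \<and> S 1 2 = j - 2" for S
    unfolding path_families_def d d2 using assms by auto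
  show ?thesis
  proof
    show "family_weights n {2, j} y \<subseteq> top_path_weight y ` {0..j - 3}"
    proof
      fix v assume "v \<in> family_weights n {2, j} y"
      then obtain S where S: "S \<in> path_families 2 n {2, j}" "v = path_sum 2 1 (S 1) y"
        unfolding family_weights_def d by auto
      then have "1 \<le> S 1 1" "S 1 1 \<le> j - 2"
        using fam unfolding is_web_path_2_1 by auto
      then have "v = top_path_weight y (S 1 1 - 1)" "S 1 1 - 1 \<in> {0..j - 3}"
        using S(2) path_sum_2_1[OF assms(3), of "S 1"] by auto
      then show "v \<in> top_path_weight y ` {0..j - 3}" by blast
    qed
  next
    show "top_path_weight y ` {0..j - 3} \<subseteq> family_weights n {2, j} y"
    proof
      fix v assume "v \<in> top_path_weight y ` {0..j - 3}"
      then obtain m where m: "m \<le> j - 3" "v = top_path_weight y m" by auto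
      define S :: "nat \<Rightarrow> nat \<Rightarrow> nat" where "S = (\<lambda>_ a. if a = 1 then Suc m else j - 2)"
      have "S \<in> path_families 2 n {2, j}"
        unfolding fam S_def is_web_path_2_1 using m assms by auto
      moreover have "path_sum 2 1 (S 1) y = v"
        using path_sum_2_1[OF assms(3), of "S 1"] m by (simp add: S_def)
      ultimately show "v \<in> family_weights n {2, j} y"
        unfolding family_weights_def d by force
    qed
  qed
qed

lemma path_families_2_two_sources_iff:
  assumes "3 \<le> i" "i < j"
  shows "S \<in> path_families 2 n {i, j} \<longleftrightarrow>
    is_web_path 2 n 1 (S 1) \<and> is_web_path 2 n 2 (S 2) \<and> S 2 2 < S 1 1 \<and> 2 + S 1 2 = j \<and> 2 + S 2 2 = i"
proof -
  have "{1..2} - {i, j} = {1, 2}" "{i, j} - {1..2} = {i, j}"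
    using assms by auto
  then have "S \<in> path_families 2 n {i, j} \<longleftrightarrow>
      is_web_path 2 n 1 (S 1) \<and> 2 + S 1 2 \<in> {i, j} \<and> is_web_path 2 n 2 (S 2) \<and> 2 + S 2 2 \<in> {i, j} \<and>
      path_vertices 2 1 (S 1) \<inter> path_vertices 2 2 (S 2) = {}"
    unfolding path_families_def by (simp add: Int_commute)
  then show ?thesis
    using path_vertices_2_disjoint_iff[of "S 1" "S 2"] assms(2) unfolding is_web_path_2_1 by auto
qed

lemma family_weights_i_j:
  assumes "3 \<le> i" "i < j" "j \<le> n" "y \<in> Vsp (inner_regions 2 n)"
  shows "family_weights n {i, j} y = top_path_weight y ` {i - 2..j - 3}"
proof -
  note fam = path_families_2_two_sources_iff[OF assms(1,2)]
  have d: "{1..2} - {i, j} = {1, 2}"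
    using assms by auto
  have weight: "(\<Sum>t\<in>{1..2} - {i, j}. path_sum 2 t (S t) y) = top_path_weight y (S 1 1 - 1)"
    if "is_web_path 2 n 1 (S 1)" for S
    using that path_sum_2_1[OF assms(4)] path_sum_2_2[OF assms(4)] unfolding d is_web_path_2_1 by simp
  show ?thesis
  proof
    show "family_weights n {i, j} y \<subseteq> top_path_weight y ` {i - 2..j - 3}"
    proof
      fix v assume "v \<in> family_weights n {i, j} y"
      then obtain S where S: "S \<in> path_families 2 n {i, j}"
        "v = (\<Sum>t\<in>{1..2} - {i, j}. path_sum 2 t (S t) y)"
        unfolding family_weights_def by auto
      then have "is_web_path 2 n 1 (S 1)" "S 2 2 < S 1 1" "2 + S 1 2 = j" "2 + S 2 2 = i"
        using fam by blast+
      then have "v = top_path_weight y (S 1 1 - 1)" "S 1 1 - 1 \<in> {i - 2..j - 3}"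
        using S(2) weight unfolding is_web_path_2_1 by auto
      then show "v \<in> top_path_weight y ` {i - 2..j - 3}" by blast
    qed
  next
    show "top_path_weight y ` {i - 2..j - 3} \<subseteq> family_weights n {i, j} y"
    proof
      fix v assume "v \<in> top_path_weight y ` {i - 2..j - 3}"
      then obtain m where m: "i - 2 \<le> m" "m \<le> j - 3" "v = top_path_weight y m" by auto
      define S :: "nat \<Rightarrow> nat \<Rightarrow> nat" where
        "S = (\<lambda>t a. if t = 1 then (if a = 1 then Suc m else j - 2) else i - 2)"
      have "S \<in> path_families 2 n {i, j}"
        unfolding fam S_def is_web_path_2_1 is_web_path_2_2 using m assms by auto
      moreover have "top_path_weight y (S 1 1 - 1) = v"
        using m by (simp add: S_def)
      ultimately show "v \<in> family_weights n {i, j} y"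
        unfolding family_weights_def using weight fam by force
    qed
  qed
qed

lemma TropP_2_eq_Min:
  assumes "K \<in> k_subsets 2 n" "y \<in> Vsp (inner_regions 2 n)"
  shows "TropP 2 n K y = Min (top_path_weight y ` {first_turn K..last_turn K})"
proof -
  obtain i j where ij: "K = {i, j}" "i < j" "1 \<le> i" "j \<le> n"
    using k_subsets_2_elim[OF assms(1)] by blast
  have "Min K = i" "Max K = j"
    using ij by auto
  then have "family_weights n K y = top_path_weight y ` {first_turn K..last_turn K}"
    using ij family_weights_if_1_in[OF assms(1) _ assms(2)] family_weights_2_j[OF _ _ assms(2)]
      family_weights_i_j[OF _ _ _ assms(2)]
    unfolding first_turn_def last_turn_def
    by (cases "i = 1"; cases "i = 2") auto
  then show ?thesis
    unfolding TropP_def family_weights_def[symmetric] by simp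
qed

lemma turn_bounds:
  assumes "K \<in> k_subsets 2 n"
  shows "first_turn K \<le> last_turn K \<and> last_turn K \<le> n - 3"
proof -
  obtain i j where ij: "K = {i, j}" "i < j" "1 \<le> i" "j \<le> n"
    using k_subsets_2_elim[OF assms] by blast
  have "Min K = i" "Max K = j"
    using ij by auto
  then show ?thesis
    unfolding first_turn_def last_turn_def using ij by auto
qed

lemma turn_bounds_range:
  assumes "3 \<le> n"
  shows "(\<lambda>K. (first_turn K, last_turn K)) ` k_subsets 2 n = {(a, b). a \<le> b \<and> b \<le> n - 3}"
proof
  show "(\<lambda>K. (first_turn K, last_turn K)) ` k_subsets 2 n \<subseteq> {(a, b). a \<le> b \<and> b \<le> n - 3}"
    using turn_bounds by auto
next
  show "{(a, b). a \<le> b \<and> b \<le> n - 3} \<subseteq> (\<lambda>K. (first_turn K, last_turn K)) ` k_subsets 2 n"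
  proof clarify
    fix a b assume ab: "a \<le> b" "b \<le> n - 3"
    define K where "K = {a + 2, b + 3}"
    have "K \<in> k_subsets 2 n"
      unfolding k_subsets_def K_def using ab assms by auto
    moreover have "Min K = a + 2" "Max K = b + 3"
      unfolding K_def using ab by auto
    then have "(a, b) = (first_turn K, last_turn K)"
      unfolding first_turn_def last_turn_def by (auto simp: K_def)
    ultimately show "(a, b) \<in> (\<lambda>K. (first_turn K, last_turn K)) ` k_subsets 2 n" by blast
  qed
qed

section \<open>The domains of linearity of F_{2,n}\<close>

definition heap_cone :: "nat \<Rightarrow> ptree \<Rightarrow> (nat \<times> nat \<Rightarrow> real) set" where
  "heap_cone n T = {y \<in> Vsp (inner_regions 2 n). heap_ordered 0 (top_path_weight y) 0 T}"

lemma heap_ordered_iff_TropP_at_lca: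
  assumes "3 \<le> n" "internals T = n - 2" "y \<in> Vsp (inner_regions 2 n)"
  shows "heap_ordered 0 (top_path_weight y) 0 T \<longleftrightarrow>
    (\<forall>K\<in>k_subsets 2 n. TropP 2 n K y = top_path_weight y (lca 0 T (first_turn K) (last_turn K)))"
proof -
  let ?P = "top_path_weight y"
  have range_min: "Min (?P ` {a..b}) = ?P (lca 0 T a b) \<longleftrightarrow> (\<forall>q\<in>{a..b}. ?P (lca 0 T a b) \<le> ?P q)"
    if "a \<le> b" "b \<le> n - 3" for a b
    using lca_between[of 0 a b T] that assms(1,2) by (subst Min_eq_iff) auto
  have "heap_ordered 0 ?P 0 T \<longleftrightarrow>
      (\<forall>(a, b)\<in>{(a, b). a \<le> b \<and> b \<le> n - 3}. \<forall>q\<in>{a..b}. ?P (lca 0 T a b) \<le> ?P q)"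
    unfolding heap_ordered_0_iff_lca_le using assms(1,2) by auto
  also have "\<dots> \<longleftrightarrow> (\<forall>(a, b)\<in>{(a, b). a \<le> b \<and> b \<le> n - 3}. Min (?P ` {a..b}) = ?P (lca 0 T a b))"
    using range_min by auto
  also have "\<dots> \<longleftrightarrow> (\<forall>K\<in>k_subsets 2 n. TropP 2 n K y = ?P (lca 0 T (first_turn K) (last_turn K)))"
    unfolding turn_bounds_range[OF assms(1), symmetric] using TropP_2_eq_Min[OF _ assms(3)] by auto
  finally show ?thesis .
qed

lemma top_path_weight_eq_linear_form:
  assumes "m \<le> n - 3"
  shows "top_path_weight y m = (\<Sum>r\<in>inner_regions 2 n. indicator (Pair 1 ` {2..Suc m}) r * y r)"
proof -
  have "inner_regions 2 n \<inter> Pair 1 ` {2..Suc m} = Pair 1 ` {2..Suc m}"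
    unfolding inner_regions_2 using assms by auto
  then have "(\<Sum>r\<in>inner_regions 2 n. indicator (Pair 1 ` {2..Suc m}) r * y r) = (\<Sum>r\<in>Pair 1 ` {2..Suc m}. y r)"
    by (simp add: mult.commute inner_regions_2)
  also have "\<dots> = top_path_weight y m"
    unfolding top_path_weight_def by (subst sum.reindex) (auto simp: inj_on_def)
  finally show ?thesis by simp
qed

lemma heap_cone_eq_linearity_set:
  assumes "3 \<le> n" "internals T = n - 2"
  shows "heap_cone n T = {y \<in> Vsp (inner_regions 2 n). \<forall>K\<in>k_subsets 2 n. TropP 2 n K y =
    (\<Sum>r\<in>inner_regions 2 n. indicator (Pair 1 ` {2..Suc (lca 0 T (first_turn K) (last_turn K))}) r * y r)}"
proof -
  have "lca 0 T (first_turn K) (last_turn K) \<le> n - 3" if "K \<in> k_subsets 2 n" for K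
  proof -
    have "first_turn K \<le> last_turn K" "last_turn K < 0 + internals T" "last_turn K \<le> n - 3"
      using turn_bounds[OF that] assms by auto
    then show ?thesis
      using lca_between[of 0 "first_turn K" "last_turn K" T] by auto
  qed
  then have "top_path_weight y (lca 0 T (first_turn K) (last_turn K)) =
      (\<Sum>r\<in>inner_regions 2 n. indicator (Pair 1 ` {2..Suc (lca 0 T (first_turn K) (last_turn K))}) r * y r)"
    if "K \<in> k_subsets 2 n" for K y
    using top_path_weight_eq_linear_form that by blast
  then have "heap_ordered 0 (top_path_weight y) 0 T \<longleftrightarrow> (\<forall>K\<in>k_subsets 2 n. TropP 2 n K y =
      (\<Sum>r\<in>inner_regions 2 n. indicator (Pair 1 ` {2..Suc (lca 0 T (first_turn K) (last_turn K))}) r * y r))"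
    if "y \<in> Vsp (inner_regions 2 n)" for y
    using heap_ordered_iff_TropP_at_lca[OF assms that] by simp
  then show ?thesis
    unfolding heap_cone_def by blast
qed

lemma top_path_weight_add_scaled:
  "top_path_weight (\<lambda>r. y r + c * z r) m = top_path_weight y m + c * top_path_weight z m"
  unfolding top_path_weight_def by (simp only: sum.distrib sum_distrib_left)

lemma top_path_weight_dist:
  assumes "\<forall>r\<in>inner_regions 2 n. \<bar>y r - y0 r\<bar> < e" "m \<le> n - 3"
  shows "\<bar>top_path_weight y m - top_path_weight y0 m\<bar> \<le> real m * e"
proof -
  have "\<bar>top_path_weight y m - top_path_weight y0 m\<bar> = \<bar>\<Sum>c\<in>{2..Suc m}. y (1, c) - y0 (1, c)\<bar>"
    unfolding top_path_weight_def by (simp add: sum_subtractf)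
  also have "\<dots> \<le> (\<Sum>c\<in>{2..Suc m}. \<bar>y (1, c) - y0 (1, c)\<bar>)"
    by (rule sum_abs)
  also have "\<dots> \<le> (\<Sum>c\<in>{2..Suc m}. e)"
    using assms unfolding inner_regions_2 by (intro sum_mono) (auto intro: less_imp_le)
  finally show ?thesis by simp
qed

text \<open>Take the depths of the vertices of T as prefix sums.\<close>

lemma exists_strictly_heap_ordered:
  assumes "internals T = n - 2"
  shows "\<exists>z \<in> Vsp (inner_regions 2 n). heap_ordered 1 (top_path_weight z) 0 T"
proof -
  define g where "g = (\<lambda>q. real (vertex_depth 0 T q))"
  define z :: "nat \<times> nat \<Rightarrow> real" where
    "z = (\<lambda>(a, c). if a = 1 \<and> 2 \<le> c \<and> c \<le> n - 2 then g (c - 1) - g (c - 2) else 0)"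
  have "z \<in> Vsp (inner_regions 2 n)"
    unfolding Vsp_def z_def inner_regions_def by auto
  have "top_path_weight z q = - g 0 + g q" if "q \<le> n - 3" for q
    using that
  proof (induction q)
    case 0
    then show ?case by simp
  next
    case (Suc q)
    have "{2..Suc (Suc q)} = insert (Suc (Suc q)) {2..Suc q}" "Suc (Suc q) \<le> n - 2"
      using Suc.prems by auto
    then show ?case
      using Suc by (simp add: top_path_weight_def z_def)
  qed
  then have "heap_ordered 1 (top_path_weight z) 0 T = heap_ordered 1 (\<lambda>q. - g 0 + g q) 0 T"
    using assms by (intro heap_ordered_cong) auto
  also have "\<dots>"
    unfolding heap_ordered_add_const g_def by (rule heap_ordered_vertex_depth)
  finally show ?thesis
    using \<open>z \<in> Vsp (inner_regions 2 n)\<close> by blast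
qed

lemma strictly_heap_ordered_ball_subset:
  assumes "\<delta> > 0" "internals T = n - 2" "heap_ordered \<delta> (top_path_weight z) 0 T"
    and "y \<in> Vsp (inner_regions 2 n)" "\<forall>r\<in>inner_regions 2 n. \<bar>y r - z r\<bar> < \<delta> / (2 * real n)"
  shows "y \<in> heap_cone n T"
proof -
  have "heap_ordered 0 (top_path_weight y) 0 T"
  proof (rule heap_ordered_perturb[OF assms(3)])
    fix q assume "0 \<le> q" "q < 0 + internals T"
    then have q: "q \<le> n - 3" "q < n"
      using assms(2) by auto
    have "\<bar>top_path_weight y q - top_path_weight z q\<bar> \<le> real q * (\<delta> / (2 * real n))"
      using top_path_weight_dist[OF assms(5) q(1)] .
    also have "\<dots> < \<delta> / 2"
      using q assms(1) by (simp add: field_simps)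
    finally show "\<bar>top_path_weight y q - top_path_weight z q\<bar> < \<delta> / 2" .
  qed
  then show ?thesis
    unfolding heap_cone_def using assms(4) by simp
qed

lemma heap_cone_has_nonempty_interior:
  assumes "3 \<le> n" "internals T = n - 2"
  shows "has_nonempty_interior (inner_regions 2 n) (heap_cone n T)"
proof -
  obtain z where z: "z \<in> Vsp (inner_regions 2 n)" "heap_ordered 1 (top_path_weight z) 0 T"
    using exists_strictly_heap_ordered[OF assms(2)] by blast
  moreover have "1 / (2 * real n) > 0"
    using assms(1) by simp
  ultimately show ?thesis
    unfolding has_nonempty_interior_def
    using strictly_heap_ordered_ball_subset[OF zero_less_one assms(2) z(2)] by blast
qed

lemma heap_cone_in_web_fan:
  assumes "3 \<le> n" "internals T = n - 2"
  shows "heap_cone n T \<in> web_fan 2 n"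
  unfolding web_fan_def linearity_domains_def mem_Collect_eq
  using heap_cone_eq_linearity_set[OF assms] heap_cone_has_nonempty_interior[OF assms]
  by (intro conjI exI[of _ "\<lambda>K. indicator (Pair 1 ` {2..Suc (lca 0 T (first_turn K) (last_turn K))})"])

lemma exists_scaling_below:
  fixes z :: "'a \<Rightarrow> real"
  assumes "finite R" "e > 0"
  obtains t where "t > 0" "\<forall>r\<in>R. t * \<bar>z r\<bar> < e"
proof -
  define M where "M = (\<Sum>r\<in>R. \<bar>z r\<bar>) + 1"
  have M: "M > 0"
    unfolding M_def by (simp add: sum_nonneg add_nonneg_pos)
  have "\<bar>z r\<bar> < M" if "r \<in> R" for r
    using member_le_sum[of r R "\<lambda>r. \<bar>z r\<bar>"] assms(1) that unfolding M_def by simp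
  then have "e / M * \<bar>z r\<bar> < e" if "r \<in> R" for r
    using mult_strict_left_mono[of "\<bar>z r\<bar>" M "e / M"] M assms(2) that by simp
  then show ?thesis
    using that[of "e / M"] M assms(2) by simp
qed

text \<open>Shift y0 slightly towards a strictly heap-ordered point.\<close>

lemma ball_contains_heap_cone_ball:
  assumes "3 \<le> n" "internals T = n - 2" "y0 \<in> Vsp (inner_regions 2 n)" "e > 0"
    and "heap_ordered 0 (top_path_weight y0) 0 T"
  obtains y1 e1 where "y1 \<in> Vsp (inner_regions 2 n)" "e1 > 0"
    "\<forall>y\<in>Vsp (inner_regions 2 n). (\<forall>r\<in>inner_regions 2 n. \<bar>y r - y1 r\<bar> < e1) \<longrightarrow>
       (\<forall>r\<in>inner_regions 2 n. \<bar>y r - y0 r\<bar> < e) \<and> y \<in> heap_cone n T"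
proof -
  let ?R = "inner_regions 2 n"
  obtain z where z: "z \<in> Vsp ?R" "heap_ordered 1 (top_path_weight z) 0 T"
    using exists_strictly_heap_ordered[OF assms(2)] by blast
  obtain t where t: "t > 0" "\<forall>r\<in>?R. t * \<bar>z r\<bar> < e / 2"
    using exists_scaling_below[of ?R "e / 2" z] assms(4) by (auto simp: inner_regions_2)
  define y1 where "y1 = (\<lambda>r. y0 r + t * z r)"
  have y1: "y1 \<in> Vsp ?R"
    using assms(3) z(1) unfolding y1_def Vsp_def by auto
  have y1_near: "\<bar>y1 r - y0 r\<bar> < e / 2" if "r \<in> ?R" for r
    using t that unfolding y1_def by (simp add: abs_mult)
  have "top_path_weight y1 = (\<lambda>q. top_path_weight y0 q + t * top_path_weight z q)"
    unfolding y1_def by (rule ext) (rule top_path_weight_add_scaled)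
  then have strict: "heap_ordered t (top_path_weight y1) 0 T"
    using heap_ordered_add_scaled[OF assms(5) z(2), of t] t by simp
  define e1 where "e1 = min (e / 2) (t / (2 * real n))"
  have "e1 > 0"
    unfolding e1_def using assms(1,4) t by simp
  moreover have "(\<forall>r\<in>?R. \<bar>y r - y0 r\<bar> < e) \<and> y \<in> heap_cone n T"
    if "y \<in> Vsp ?R" "\<forall>r\<in>?R. \<bar>y r - y1 r\<bar> < e1" for y
  proof
    show "\<forall>r\<in>?R. \<bar>y r - y0 r\<bar> < e"
    proof
      fix r assume r: "r \<in> ?R"
      have "\<bar>y r - y1 r\<bar> < e / 2"
        using that(2) r unfolding e1_def by auto
      then show "\<bar>y r - y0 r\<bar> < e"
        using y1_near[OF r] by linarith
    qed
    have "\<forall>r\<in>?R. \<bar>y r - y1 r\<bar> < t / (2 * real n)"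
      using that(2) unfolding e1_def by auto
    then show "y \<in> heap_cone n T"
      using strictly_heap_ordered_ball_subset[OF t(1) assms(2) strict that(1)] by blast
  qed
  ultimately show ?thesis
    using that y1 by blast
qed

lemma linear_forms_eq_on_ball:
  assumes "finite R" "y1 \<in> Vsp R" "e > 0" "r0 \<in> R"
    and "\<forall>y\<in>Vsp R. (\<forall>r\<in>R. \<bar>y r - y1 r\<bar> < e) \<longrightarrow> (\<Sum>r\<in>R. a r * y r) = (\<Sum>r\<in>R. b r * y r)"
  shows "a r0 = b r0"
proof -
  define y where "y = (\<lambda>r. y1 r + (if r = r0 then e / 2 else 0))"
  have "y \<in> Vsp R"
    using assms(2,4) unfolding y_def Vsp_def by auto
  then have "(\<Sum>r\<in>R. a r * y r) = (\<Sum>r\<in>R. b r * y r)" "(\<Sum>r\<in>R. a r * y1 r) = (\<Sum>r\<in>R. b r * y1 r)"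
    using assms(2,3,5) unfolding y_def by auto
  moreover have "(\<Sum>r\<in>R. c r * y r) = (\<Sum>r\<in>R. c r * y1 r) + c r0 * (e / 2)" for c
  proof -
    have "(\<Sum>r\<in>R. c r * y r) = (\<Sum>r\<in>R. c r * y1 r + (if r = r0 then c r * (e / 2) else 0))"
      unfolding y_def by (intro sum.cong) (auto simp: algebra_simps)
    then show ?thesis
      using assms(1,4) by (simp add: sum.distrib sum.delta)
  qed
  ultimately show ?thesis
    using assms(3) by simp
qed

text \<open>A domain of linearity D contains a ball of some heap_cone n T (take T the Cartesian tree of
  an interior point); the linear maps on D and on heap_cone n T agree there, hence coincide.\<close>

lemma web_fan_2_elim:
  assumes "3 \<le> n" "D \<in> web_fan 2 n"
  obtains T where "internals T = n - 2" "D = heap_cone n T"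
proof -
  let ?R = "inner_regions 2 n"
  obtain A where A: "D = {y \<in> Vsp ?R. \<forall>K\<in>k_subsets 2 n. TropP 2 n K y = (\<Sum>r\<in>?R. A K r * y r)}"
    and "has_nonempty_interior ?R D"
    using assms(2) unfolding web_fan_def linearity_domains_def by blast
  then obtain y0 e where y0: "y0 \<in> Vsp ?R" "e > 0"
    and ball: "\<forall>y\<in>Vsp ?R. (\<forall>r\<in>?R. \<bar>y r - y0 r\<bar> < e) \<longrightarrow> y \<in> D"
    unfolding has_nonempty_interior_def by blast
  obtain T where T: "internals T = n - 2" "heap_ordered 0 (top_path_weight y0) 0 T"
    using cartesian_tree_exists by blast
  obtain y1 e1 where y1: "y1 \<in> Vsp ?R" "e1 > 0"
    and small_ball: "\<forall>y\<in>Vsp ?R. (\<forall>r\<in>?R. \<bar>y r - y1 r\<bar> < e1) \<longrightarrow>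
       (\<forall>r\<in>?R. \<bar>y r - y0 r\<bar> < e) \<and> y \<in> heap_cone n T"
    using ball_contains_heap_cone_ball[OF assms(1) T(1) y0 T(2)] by blast
  let ?B = "\<lambda>K. indicator (Pair 1 ` {2..Suc (lca 0 T (first_turn K) (last_turn K))})"
  have "A K r = ?B K r" if "K \<in> k_subsets 2 n" "r \<in> ?R" for K r
  proof (rule linear_forms_eq_on_ball[OF _ y1 that(2)])
    show "finite ?R"
      by (simp add: inner_regions_2)
    show "\<forall>y\<in>Vsp ?R. (\<forall>r\<in>?R. \<bar>y r - y1 r\<bar> < e1) \<longrightarrow> (\<Sum>r\<in>?R. A K r * y r) = (\<Sum>r\<in>?R. ?B K r * y r)"
      using small_ball ball that(1) unfolding A heap_cone_eq_linearity_set[OF assms(1) T(1)] by auto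
  qed
  then have "D = heap_cone n T"
    unfolding A heap_cone_eq_linearity_set[OF assms(1) T(1)] by (auto cong: sum.cong)
  then show ?thesis
    using that T(1) by blast
qed

lemma web_fan_2_eq: "3 \<le> n \<Longrightarrow> web_fan 2 n = heap_cone n ` {T. internals T = n - 2}"
  using web_fan_2_elim heap_cone_in_web_fan by blast

section \<open>Passing to the coordinates x_m\<close>

lemma top_path_weight_eq_prefix_sum:
  assumes "q \<le> n - 3"
  shows "top_path_weight y q = prefix_sum (coords2 n y) q"
proof -
  have "prefix_sum (coords2 n y) q = (\<Sum>l\<in>{1..q}. y (1, Suc l))"
    unfolding prefix_sum_def coords2_def using assms by (intro sum.cong) auto
  also have "\<dots> = (\<Sum>c\<in>{Suc 1..Suc q}. y (1, c))"
    by (rule sum.shift_bounds_cl_Suc_ivl[symmetric])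
  finally show ?thesis
    unfolding top_path_weight_def by (simp add: numeral_2_eq_2)
qed

lemma coords2_image_heap_cone:
  assumes "3 \<le> n" "internals T = n - 2"
  shows "coords2 n ` heap_cone n T = SP_cone (n - 3) T"
proof -
  have heap: "heap_ordered 0 (top_path_weight y) 0 T = heap_ordered 0 (prefix_sum (coords2 n y)) 0 T" for y
    using assms top_path_weight_eq_prefix_sum by (intro heap_ordered_cong) auto
  have "x \<in> coords2 n ` Vsp (inner_regions 2 n)" if "x \<in> Vsp {1..n - 3}" for x
  proof
    define y :: "nat \<times> nat \<Rightarrow> real" where
      "y = (\<lambda>(a, c). if a = 1 \<and> 2 \<le> c \<and> c \<le> n - 2 then x (c - 1) else 0)"
    show "y \<in> Vsp (inner_regions 2 n)"
      unfolding y_def Vsp_def inner_regions_def by auto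
    show "x = coords2 n y"
    proof
      fix m
      show "x m = coords2 n y m"
        using that assms(1) unfolding coords2_def y_def Vsp_def by auto
    qed
  qed
  moreover have "coords2 n y \<in> Vsp {1..n - 3}" for y
    unfolding coords2_def Vsp_def by auto
  ultimately show ?thesis
    unfolding SP_cone_eq_heap_ordered heap_cone_def using heap by auto
qed

theorem mainTheorem8:
  fixes n :: nat
  assumes "n \<ge> 4"
  shows "(\<lambda>C. coords2 n ` C) ` web_fan 2 n = stanley_pitman_fan (n - 3)"
proof -
  have n: "3 \<le> n"
    using assms by simp
  have "{T. leaves T = n - 3 + 2} = {T. internals T = n - 2}"
    using n by (auto simp: leaves_eq_Suc_internals)
  then have "stanley_pitman_fan (n - 3) = (\<lambda>T. SP_cone (n - 3) T) ` {T. internals T = n - 2}"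
    unfolding stanley_pitman_fan_def by auto
  also have "\<dots> = (\<lambda>T. coords2 n ` heap_cone n T) ` {T. internals T = n - 2}"
    using coords2_image_heap_cone[OF n] by simp
  finally show ?thesis
    unfolding web_fan_2_eq[OF n] image_image by simp
qed

end
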